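(* On the carrier $\mathbb{F}_2^5$, with indices taken modulo $5$, define $((x_i)_{i=1}^5\diamond(y_i)_{i=1}^5)_i=1-x_{i+1}y_{i-1}$. This finite magma satisfies $\mathrm{x}\simeq(\mathrm{y}\diamond\mathrm{x})\diamond(\mathrm{x}\diamond(\mathrm{z}\diamond\mathrm{y}))$ but does not satisfy $\mathrm{x}\simeq(\mathrm{x}\diamond\mathrm{x})\diamond(\mathrm{x}\diamond\mathrm{x})$. Consequently the first law does not imply the second, even for finite magmas.
   Context: $\mathbb{F}_2$ is the field with two elements; arithmetic in each coordinate is in $\mathbb{F}_2$. A magma satisfies a law if the identity holds for all assignments of variables. *)

theory Defs
  imports "HOL-Analysis.Analysis" "HOL-Library.Z2"
begin

definition dmd :: "bit ^ 5 \<Rightarrow> bit ^ 5 \<Rightarrow> bit ^ 5" (infixl "\<diamond>" 70) where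
  "x \<diamond> y = (\<chi> i. 1 - x $ (i + 1) * y $ (i - 1))"

end

theory Submission
  imports Defs
begin

text \<open>Unfolding the operation twice, coordinate \<open>i\<close> of
\<open>(y \<diamond> x) \<diamond> (x \<diamond> (z \<diamond> y))\<close> is \<open>1 - (1 - b a) (1 - a (1 - c b))\<close> with
\<open>a = x\<^sub>i\<close>, \<open>b = y\<^sub>i\<^sub>+\<^sub>2\<close>, \<open>c = z\<^sub>i\<^sub>-\<^sub>1\<close>; the two occurrences of \<open>b\<close> are the
same coordinate because \<open>i + 2 = i - 3\<close> modulo 5. For idempotent \<open>a\<close>, \<open>b\<close> this
expression equals \<open>a\<close>. The second law fails at any unit vector \<open>e\<^sub>k\<close>: coordinate
\<open>k\<close> of \<open>(e\<^sub>k \<diamond> e\<^sub>k) \<diamond> (e\<^sub>k \<diamond> e\<^sub>k)\<close> is \<open>1 - 1 \<cdot> 1 = 0\<close>.\<close>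

lemma idempotent_absorption:
  fixes a b c :: "'a::comm_ring_1"
  assumes "a * a = a" and "b * b = b"
  shows "1 - (1 - b * a) * (1 - a * (1 - c * b)) = a"
proof -
  have "(1 - b * a) * (1 - a * (1 - c * b))
      = 1 - a + (a * a) * b - (a * a) * (b * b) * c + a * b * c - a * b"
    by (simp add: algebra_simps)
  also have "\<dots> = 1 - a"
    using assms by (simp add: algebra_simps)
  finally show ?thesis by simp
qed

lemma bit_mult_self [simp]: "(b::bit) * b = b"
  by (cases b) simp_all

lemma dmd_nth: "(x \<diamond> y) $ i = 1 - x $ (i + 1) * y $ (i - 1)"
  by (simp add: dmd_def)

lemma mod5_plus_two_eq_minus_three: "(i::5) + 1 + 1 = i - 1 - 1 - 1"
proof -
  have "(5::5) = 0" by simp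
  then show ?thesis by (simp add: algebra_simps)
qed

lemma dmd_law: "x = (y \<diamond> x) \<diamond> (x \<diamond> (z \<diamond> y))"
  unfolding vec_eq_iff
proof
  fix i :: 5
  show "x $ i = ((y \<diamond> x) \<diamond> (x \<diamond> (z \<diamond> y))) $ i"
    unfolding dmd_nth diff_add_cancel add_diff_cancel mod5_plus_two_eq_minus_three
    by (simp only: idempotent_absorption bit_mult_self)
qed

lemma dmd_square_law_fails_at_axis:
  "(axis k 1 \<diamond> axis k 1) \<diamond> (axis k 1 \<diamond> axis k 1) \<noteq> axis k (1::bit)"
proof -
  have "((axis k 1 \<diamond> axis k 1) \<diamond> (axis k 1 \<diamond> axis k 1)) $ k = (0::bit)"
    by (simp add: dmd_nth axis_def)
  then show ?thesis
    by (metis axis_nth zero_neq_one)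
qed

instance bit :: finite
proof
  have "(UNIV :: bit set) = {0, 1}"
    using bit_not_zero_iff by auto
  then show "finite (UNIV :: bit set)"
    by (metis finite.emptyI finite_insert)
qed

theorem mainTheorem18:
  shows "(\<forall>x y z :: bit ^ 5. x = (y \<diamond> x) \<diamond> (x \<diamond> (z \<diamond> y)))
       \<and> \<not> (\<forall>x :: bit ^ 5. x = (x \<diamond> x) \<diamond> (x \<diamond> x))
       \<and> finite (UNIV :: (bit ^ 5) set)"
  using dmd_law dmd_square_law_fails_at_axis[of 0] by (metis finite_class.finite_UNIV)

end
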